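(* Let $D,\ell,\beta>0$ and $a>0$, and let $h$ solve $\omega_N^2h(x)+2\xi\omega_Nh'(x)+h''(x)=0$ with $h(0)=0$, $h'(0)=1$, where $\omega_N=\frac{\sqrt{a\beta}}{2}$ and $\xi=\frac{D\ell}{4}\sqrt{\beta/a}$. If $$a=\frac{D^2\ell^2\beta}{16}\Big(1-\tanh^2\Big(\frac{D^2\ell\beta}{8}\Big)\Big),$$ then $h'(x)>0$ and $h''(x)<0$ for all $x\in[0,D]$, and $$(h'(D))^{-1}=\frac{e^{D\omega_N\xi}}{\cosh(D\omega_N\sqrt{\xi^2-1})-\frac{\xi}{\sqrt{\xi^2-1}}\sinh(D\omega_N\sqrt{\xi^2-1})}.$$ If $D^2\ell\beta<8$ and $a=\frac{4}{D^2\beta}$, then $h'(x)>0$ and $h''(x)<0$ for all $x\in[0,D]$, and $$(h'(D))^{-1}=\frac{e^{D\omega_N\xi}}{\cos(D\omega_N\sqrt{1-\xi^2})-\frac{\xi}{\sqrt{1-\xi^2}}\sin(D\omega_N\sqrt{1-\xi^2})}.$$ *)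

theory Defs
  imports Complex_Main
begin

end

theory Submission
  imports Defs
begin

text \<open>
  With \<open>k = \<omega> \<xi>\<close> the equation is the damped oscillator \<open>h'' + 2 k h' + \<omega>\<^sup>2 h = 0\<close>. An energy
  estimate shows that a solution is determined on \<open>[0, \<infinity>)\<close> by its initial values, so \<open>h\<close> is
  \<open>exp (- k x) sinh (m x) / m\<close> with \<open>m = \<omega> sqrt (\<xi>\<^sup>2 - 1)\<close> in the first case and
  \<open>exp (- k x) sin (m x) / m\<close> with \<open>m = \<omega> sqrt (1 - \<xi>\<^sup>2)\<close> in the second. Writing \<open>\<xi> = cosh t\<close>,
  resp. \<open>\<xi> = cos \<phi>\<close>, the derivative \<open>h'(x)\<close> is a positive multiple of \<open>sinh (t - m x)\<close>,
  resp. \<open>sin (\<phi> - m x)\<close>, hence positive as long as \<open>m x < t\<close>, resp. \<open>m x < \<phi>\<close>. The two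
  choices of \<open>a\<close> make \<open>m D = t tanh t < t\<close>, resp. \<open>m D = sin \<phi> < \<phi>\<close>. Finally \<open>h' > 0\<close> and
  \<open>h(0) = 0\<close> give \<open>h \<ge> 0\<close> on \<open>[0, D]\<close>, so \<open>h'' = - \<omega>\<^sup>2 h - 2 k h' < 0\<close> there.
\<close>

lemma sin_less_self:
  fixes x :: real
  assumes "0 < x"
  shows "sin x < x"
proof (cases "x < 2")
  case True
  have "sin (x / 2) \<le> x / 2" "0 < sin (x / 2)" "cos (x / 2) < 1"
    using sin_x_le_x[of "x / 2"] assms True pi_ge_two cos_monotone_0_pi[of 0 "x / 2"]
    by (auto intro: sin_gt_zero)
  then have "2 * sin (x / 2) * cos (x / 2) < 2 * sin (x / 2)"
    by simp
  with \<open>sin (x / 2) \<le> x / 2\<close> show ?thesis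
    using sin_double[of "x / 2"] by simp
next
  case False
  then show ?thesis
    using sin_le_one[of x] by linarith
qed

lemma coth_mult_sinh_less_cosh:
  fixes t y :: real
  assumes "0 < t" "y < t"
  shows "cosh t / sinh t * sinh y < cosh y"
proof -
  have "0 < sinh (t - y)" "0 < sinh t"
    using assms by simp_all
  then show ?thesis
    by (simp add: sinh_diff field_simps)
qed

lemma cot_mult_sin_less_cos:
  fixes \<phi> y :: real
  assumes "0 \<le> y" "y < \<phi>" "\<phi> < pi"
  shows "cos \<phi> / sin \<phi> * sin y < cos y"
proof -
  have "0 < sin (\<phi> - y)" "0 < sin \<phi>"
    using assms by (simp_all add: sin_gt_zero)
  then show ?thesis
    by (simp add: sin_diff field_simps)
qed

lemma one_minus_tanh_square:
  fixes t :: real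
  shows "1 - (tanh t)\<^sup>2 = 1 / (cosh t)\<^sup>2"
proof -
  have "1 - (tanh t)\<^sup>2 = ((cosh t)\<^sup>2 - (sinh t)\<^sup>2) / (cosh t)\<^sup>2"
    by (simp add: tanh_def power_divide diff_divide_distrib)
  then show ?thesis
    by (simp add: hyperbolic_pythagoras)
qed

definition solves_damped_oscillator ::
    "real \<Rightarrow> real \<Rightarrow> (real \<Rightarrow> real) \<Rightarrow> (real \<Rightarrow> real) \<Rightarrow> bool" where
  "solves_damped_oscillator \<omega> k f f' \<longleftrightarrow>
     (\<forall>x. (f has_real_derivative f' x) (at x) \<and>
          (f' has_real_derivative - (\<omega>\<^sup>2 * f x) - 2 * k * f' x) (at x))"

lemma solves_damped_oscillator_unique:
  assumes f: "solves_damped_oscillator \<omega> k f f'" and g: "solves_damped_oscillator \<omega> k g g'"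
    and "k \<ge> 0" "\<omega> \<noteq> 0" "f 0 = g 0" "f' 0 = g' 0" "0 \<le> x"
  shows "f x = g x" "f' x = g' x"
proof -
  define E where "E y = (f' y - g' y)\<^sup>2 + \<omega>\<^sup>2 * (f y - g y)\<^sup>2" for y
  have "(E has_real_derivative - 4 * k * (f' y - g' y)\<^sup>2) (at y)" for y
    using f g unfolding solves_damped_oscillator_def E_def
    by (auto intro!: derivative_eq_intros simp: power2_eq_square algebra_simps)
  moreover have "- 4 * k * (f' y - g' y)\<^sup>2 \<le> 0" for y
    using \<open>k \<ge> 0\<close> by simp
  ultimately have "E x \<le> E 0"
    using DERIV_nonpos_imp_nonincreasing[of 0 x E] \<open>0 \<le> x\<close> by blast
  also have "E 0 = 0"
    using \<open>f 0 = g 0\<close> \<open>f' 0 = g' 0\<close> by (simp add: E_def)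
  finally have "(f' x - g' x)\<^sup>2 = 0" "\<omega>\<^sup>2 * (f x - g x)\<^sup>2 = 0"
    unfolding E_def by (smt (verit) zero_le_power2 zero_le_mult_iff)+
  then show "f x = g x" "f' x = g' x"
    using \<open>\<omega> \<noteq> 0\<close> by simp_all
qed

lemma solves_damped_oscillator_overdamped:
  fixes k m \<omega> :: real
  assumes "m \<noteq> 0" "m\<^sup>2 = k\<^sup>2 - \<omega>\<^sup>2"
  shows "solves_damped_oscillator \<omega> k (\<lambda>x. exp (- k * x) * sinh (m * x) / m)
           (\<lambda>x. exp (- k * x) * (cosh (m * x) - k / m * sinh (m * x)))"
  unfolding solves_damped_oscillator_def
proof (intro allI conjI)
  fix x
  show "((\<lambda>x. exp (- k * x) * sinh (m * x) / m) has_real_derivative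
      exp (- k * x) * (cosh (m * x) - k / m * sinh (m * x))) (at x)"
    using \<open>m \<noteq> 0\<close> by (auto intro!: derivative_eq_intros simp: field_simps)
  have \<omega>_sq: "\<omega>\<^sup>2 = k\<^sup>2 - m\<^sup>2"
    using assms by simp
  show "((\<lambda>x. exp (- k * x) * (cosh (m * x) - k / m * sinh (m * x))) has_real_derivative
      - (\<omega>\<^sup>2 * (exp (- k * x) * sinh (m * x) / m))
      - 2 * k * (exp (- k * x) * (cosh (m * x) - k / m * sinh (m * x)))) (at x)"
    unfolding \<omega>_sq
    by (rule derivative_eq_intros refl)+ (use \<open>m \<noteq> 0\<close> in \<open>simp add: field_simps power2_eq_square\<close>)
qed

lemma solves_damped_oscillator_underdamped:
  fixes k m \<omega> :: real
  assumes "m \<noteq> 0" "m\<^sup>2 = \<omega>\<^sup>2 - k\<^sup>2"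
  shows "solves_damped_oscillator \<omega> k (\<lambda>x. exp (- k * x) * sin (m * x) / m)
           (\<lambda>x. exp (- k * x) * (cos (m * x) - k / m * sin (m * x)))"
  unfolding solves_damped_oscillator_def
proof (intro allI conjI)
  fix x
  show "((\<lambda>x. exp (- k * x) * sin (m * x) / m) has_real_derivative
      exp (- k * x) * (cos (m * x) - k / m * sin (m * x))) (at x)"
    using \<open>m \<noteq> 0\<close> by (auto intro!: derivative_eq_intros simp: field_simps)
  have \<omega>_sq: "\<omega>\<^sup>2 = k\<^sup>2 + m\<^sup>2"
    using assms by simp
  show "((\<lambda>x. exp (- k * x) * (cos (m * x) - k / m * sin (m * x))) has_real_derivative
      - (\<omega>\<^sup>2 * (exp (- k * x) * sin (m * x) / m))
      - 2 * k * (exp (- k * x) * (cos (m * x) - k / m * sin (m * x)))) (at x)"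
    unfolding \<omega>_sq
    by (rule derivative_eq_intros refl)+ (use \<open>m \<noteq> 0\<close> in \<open>simp add: field_simps power2_eq_square\<close>)
qed

lemma solves_damped_oscillator_concave:
  assumes osc: "solves_damped_oscillator \<omega> k f f'" and "k > 0" "f 0 = 0"
    and pos: "\<forall>y\<in>{0..D}. f' y > 0" and x: "x \<in> {0..D}"
  shows "- (\<omega>\<^sup>2 * f x) - 2 * k * f' x < 0"
proof -
  have "f 0 \<le> f x"
  proof (rule DERIV_nonneg_imp_nondecreasing[of 0 x f])
    fix y
    assume "0 \<le> y" "y \<le> x"
    then have "(f has_real_derivative f' y) (at y)" "0 < f' y"
      using osc pos x by (auto simp: solves_damped_oscillator_def)
    then show "\<exists>d. (f has_real_derivative d) (at y) \<and> 0 \<le> d"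
      by (blast intro: less_imp_le)
  qed (use x in simp)
  then have "0 \<le> \<omega>\<^sup>2 * f x"
    using \<open>f 0 = 0\<close> by simp
  moreover have "0 < k * f' x"
    using \<open>k > 0\<close> pos x by simp
  ultimately show ?thesis
    by linarith
qed

lemma overdamped_derivative_eq:
  assumes osc: "solves_damped_oscillator \<omega> (\<omega> * \<xi>) h h'" and "h 0 = 0" "h' 0 = 1"
    and "\<omega> > 0" "\<xi> > 1" "0 \<le> x"
  shows "h' x = exp (- (\<omega> * \<xi>) * x) *
    (cosh (\<omega> * sqrt (\<xi>\<^sup>2 - 1) * x) - \<xi> / sqrt (\<xi>\<^sup>2 - 1) * sinh (\<omega> * sqrt (\<xi>\<^sup>2 - 1) * x))"
proof -
  define s where "s = sqrt (\<xi>\<^sup>2 - 1)"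
  have "s > 0" "s\<^sup>2 = \<xi>\<^sup>2 - 1"
    using \<open>\<xi> > 1\<close> by (simp_all add: s_def)
  then have "\<omega> * s \<noteq> 0" "(\<omega> * s)\<^sup>2 = (\<omega> * \<xi>)\<^sup>2 - \<omega>\<^sup>2"
    using \<open>\<omega> > 0\<close> by (simp_all add: power_mult_distrib right_diff_distrib)
  note explicit = solves_damped_oscillator_overdamped[OF this]
  have "h' x = exp (- (\<omega> * \<xi>) * x) *
      (cosh (\<omega> * s * x) - \<omega> * \<xi> / (\<omega> * s) * sinh (\<omega> * s * x))"
    using solves_damped_oscillator_unique(2)[OF osc explicit] assms by simp
  then show ?thesis
    using \<open>\<omega> > 0\<close> by (simp add: s_def)
qed

lemma underdamped_derivative_eq:
  assumes osc: "solves_damped_oscillator \<omega> (\<omega> * \<xi>) h h'" and "h 0 = 0" "h' 0 = 1"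
    and "\<omega> > 0" "0 \<le> \<xi>" "\<xi> < 1" "0 \<le> x"
  shows "h' x = exp (- (\<omega> * \<xi>) * x) *
    (cos (\<omega> * sqrt (1 - \<xi>\<^sup>2) * x) - \<xi> / sqrt (1 - \<xi>\<^sup>2) * sin (\<omega> * sqrt (1 - \<xi>\<^sup>2) * x))"
proof -
  define c where "c = sqrt (1 - \<xi>\<^sup>2)"
  have "\<xi>\<^sup>2 < 1"
    using \<open>0 \<le> \<xi>\<close> \<open>\<xi> < 1\<close> by (simp add: power_less_one_iff)
  then have "c > 0" "c\<^sup>2 = 1 - \<xi>\<^sup>2"
    by (simp_all add: c_def)
  then have "\<omega> * c \<noteq> 0" "(\<omega> * c)\<^sup>2 = \<omega>\<^sup>2 - (\<omega> * \<xi>)\<^sup>2"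
    using \<open>\<omega> > 0\<close> by (simp_all add: power_mult_distrib right_diff_distrib)
  note explicit = solves_damped_oscillator_underdamped[OF this]
  have "h' x = exp (- (\<omega> * \<xi>) * x) *
      (cos (\<omega> * c * x) - \<omega> * \<xi> / (\<omega> * c) * sin (\<omega> * c * x))"
    using solves_damped_oscillator_unique(2)[OF osc explicit] assms by simp
  then show ?thesis
    using \<open>\<omega> > 0\<close> by (simp add: c_def)
qed

lemma overdamped_derivative_pos:
  assumes osc: "solves_damped_oscillator \<omega> (\<omega> * cosh t) h h'" and "h 0 = 0" "h' 0 = 1"
    and "\<omega> > 0" "t > 0" "0 \<le> x" "\<omega> * sinh t * x < t"
  shows "h' x > 0"
proof -
  have "cosh t > 1"
    using cosh_real_ge_1[of t] cosh_real_one_iff[of t] \<open>t > 0\<close> by linarith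
  moreover have "sqrt ((cosh t)\<^sup>2 - 1) = sinh t"
    using \<open>t > 0\<close> by (simp add: cosh_square_eq)
  ultimately have "h' x = exp (- (\<omega> * cosh t) * x) *
      (cosh (\<omega> * sinh t * x) - cosh t / sinh t * sinh (\<omega> * sinh t * x))"
    using overdamped_derivative_eq[OF osc] assms by simp
  moreover have "cosh t / sinh t * sinh (\<omega> * sinh t * x) < cosh (\<omega> * sinh t * x)"
    using assms by (intro coth_mult_sinh_less_cosh)
  ultimately show ?thesis
    by simp
qed

lemma underdamped_derivative_pos:
  assumes osc: "solves_damped_oscillator \<omega> (\<omega> * \<xi>) h h'" and "h 0 = 0" "h' 0 = 1"
    and "\<omega> > 0" "0 \<le> \<xi>" "\<xi> < 1" "0 \<le> x" "\<omega> * sqrt (1 - \<xi>\<^sup>2) * x < arccos \<xi>"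
  shows "h' x > 0"
proof -
  define y where "y = \<omega> * sqrt (1 - \<xi>\<^sup>2) * x"
  have "0 \<le> sqrt (1 - \<xi>\<^sup>2)"
    using assms by (simp add: power_le_one)
  then have "0 \<le> y"
    using assms by (simp add: y_def)
  have "h' x = exp (- (\<omega> * \<xi>) * x) * (cos y - \<xi> / sqrt (1 - \<xi>\<^sup>2) * sin y)"
    using underdamped_derivative_eq[OF osc] assms by (simp add: y_def)
  moreover have "cos (arccos \<xi>) / sin (arccos \<xi>) * sin y < cos y"
    using arccos_lt_bounded[of \<xi>] assms by (intro cot_mult_sin_less_cos \<open>0 \<le> y\<close>) (simp_all add: y_def)
  ultimately show ?thesis
    using assms by (simp add: sin_arccos_abs)
qed

lemma overdamped_regime:
  assumes osc: "solves_damped_oscillator \<omega> (\<omega> * \<xi>) h h'" and init: "h 0 = 0" "h' 0 = 1"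
    and "\<omega> > 0" "t > 0" "\<xi> = cosh t" "\<omega> * D = t / cosh t"
  shows "(\<forall>x\<in>{0..D}. h' x > 0) \<and>
    inverse (h' D) = exp (D * \<omega> * \<xi>) /
      (cosh (D * \<omega> * sqrt (\<xi>\<^sup>2 - 1)) - \<xi> / sqrt (\<xi>\<^sup>2 - 1) * sinh (D * \<omega> * sqrt (\<xi>\<^sup>2 - 1)))"
proof
  have "\<omega> * sinh t * D = sinh t * (\<omega> * D)"
    by (simp only: ac_simps)
  also have "\<dots> = t * tanh t"
    unfolding \<open>\<omega> * D = t / cosh t\<close> by (simp add: tanh_def)
  also have "\<dots> < t"
    using \<open>t > 0\<close> tanh_real_lt_1[of t] by simp
  finally have critical: "\<omega> * sinh t * D < t" .
  show "\<forall>x\<in>{0..D}. h' x > 0"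
  proof
    fix x
    assume "x \<in> {0..D}"
    then have "0 \<le> x" "x \<le> D"
      by simp_all
    have "0 \<le> \<omega> * sinh t"
      using \<open>\<omega> > 0\<close> \<open>t > 0\<close> by simp
    from mult_left_mono[OF \<open>x \<le> D\<close> this] critical have "\<omega> * sinh t * x < t"
      by linarith
    then show "h' x > 0"
      using overdamped_derivative_pos[OF osc[unfolded \<open>\<xi> = cosh t\<close>] init] assms \<open>0 \<le> x\<close>
      by blast
  qed
  have "\<xi> > 1"
    using \<open>\<xi> = cosh t\<close> cosh_real_ge_1[of t] cosh_real_one_iff[of t] \<open>t > 0\<close> by linarith
  moreover have "D \<ge> 0"
    using \<open>\<omega> * D = t / cosh t\<close> \<open>\<omega> > 0\<close> \<open>t > 0\<close> zero_le_mult_iff[of \<omega> D] by simp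
  ultimately show "inverse (h' D) = exp (D * \<omega> * \<xi>) /
      (cosh (D * \<omega> * sqrt (\<xi>\<^sup>2 - 1)) - \<xi> / sqrt (\<xi>\<^sup>2 - 1) * sinh (D * \<omega> * sqrt (\<xi>\<^sup>2 - 1)))"
    using overdamped_derivative_eq[OF osc init \<open>\<omega> > 0\<close>]
    by (simp add: exp_minus divide_inverse inverse_mult_distrib ac_simps)
qed

lemma underdamped_regime:
  assumes osc: "solves_damped_oscillator \<omega> (\<omega> * \<xi>) h h'" and init: "h 0 = 0" "h' 0 = 1"
    and "\<omega> > 0" "0 \<le> \<xi>" "\<xi> < 1" "\<omega> * D = 1"
  shows "(\<forall>x\<in>{0..D}. h' x > 0) \<and>
    inverse (h' D) = exp (D * \<omega> * \<xi>) /
      (cos (D * \<omega> * sqrt (1 - \<xi>\<^sup>2)) - \<xi> / sqrt (1 - \<xi>\<^sup>2) * sin (D * \<omega> * sqrt (1 - \<xi>\<^sup>2)))"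
proof
  define c where "c = sqrt (1 - \<xi>\<^sup>2)"
  have "0 < arccos \<xi>" "sin (arccos \<xi>) = c"
    using arccos_lt_bounded[of \<xi>] \<open>0 \<le> \<xi>\<close> \<open>\<xi> < 1\<close> by (simp_all add: sin_arccos_abs c_def)
  have "\<omega> * c * D = c * (\<omega> * D)"
    by (simp only: ac_simps)
  also have "\<dots> < arccos \<xi>"
    using sin_less_self \<open>0 < arccos \<xi>\<close> \<open>sin (arccos \<xi>) = c\<close> \<open>\<omega> * D = 1\<close> by auto
  finally have critical: "\<omega> * c * D < arccos \<xi>" .
  have "0 \<le> c"
    using \<open>0 \<le> \<xi>\<close> \<open>\<xi> < 1\<close> by (simp add: c_def power_le_one)
  show "\<forall>x\<in>{0..D}. h' x > 0"
  proof
    fix x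
    assume "x \<in> {0..D}"
    then have "0 \<le> x" "x \<le> D"
      by simp_all
    have "0 \<le> \<omega> * c"
      using \<open>\<omega> > 0\<close> \<open>0 \<le> c\<close> by simp
    from mult_left_mono[OF \<open>x \<le> D\<close> this] critical have "\<omega> * c * x < arccos \<xi>"
      by linarith
    then show "h' x > 0"
      using underdamped_derivative_pos[OF osc init] assms \<open>0 \<le> x\<close> unfolding c_def
      by blast
  qed
  have "D \<ge> 0"
    using \<open>\<omega> * D = 1\<close> \<open>\<omega> > 0\<close> zero_le_mult_iff[of \<omega> D] by simp
  then show "inverse (h' D) = exp (D * \<omega> * \<xi>) /
      (cos (D * \<omega> * sqrt (1 - \<xi>\<^sup>2)) - \<xi> / sqrt (1 - \<xi>\<^sup>2) * sin (D * \<omega> * sqrt (1 - \<xi>\<^sup>2)))"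
    using underdamped_derivative_eq[OF osc init \<open>\<omega> > 0\<close> \<open>0 \<le> \<xi>\<close> \<open>\<xi> < 1\<close>]
    by (simp add: exp_minus divide_inverse inverse_mult_distrib ac_simps)
qed

lemma overdamped_parameters:
  fixes D l \<beta> a \<omega> \<xi> t :: real
  assumes "D > 0" "l > 0" "\<beta> > 0"
    and \<omega>_def: "\<omega> = sqrt (a * \<beta>) / 2" and \<xi>_def: "\<xi> = D * l / 4 * sqrt (\<beta> / a)"
    and t_def: "t = D\<^sup>2 * l * \<beta> / 8"
    and a_def: "a = D\<^sup>2 * l\<^sup>2 * \<beta> / 16 * (1 - (tanh t)\<^sup>2)"
  shows "\<xi> = cosh t" "\<omega> * D = t / cosh t"
proof -
  have a_eq: "a = (D * l / (4 * cosh t))\<^sup>2 * \<beta>"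
    unfolding a_def one_minus_tanh_square by (simp add: power2_eq_square)
  have "\<beta> / a = (4 * cosh t / (D * l))\<^sup>2"
    using \<open>D > 0\<close> \<open>l > 0\<close> \<open>\<beta> > 0\<close> by (simp add: a_eq power2_eq_square field_simps)
  then have "sqrt (\<beta> / a) = 4 * cosh t / (D * l)"
    using \<open>D > 0\<close> \<open>l > 0\<close> by (intro real_sqrt_unique) auto
  then show "\<xi> = cosh t"
    using \<xi>_def \<open>D > 0\<close> \<open>l > 0\<close> by simp
  have "a * \<beta> = (D * l * \<beta> / (4 * cosh t))\<^sup>2"
    by (simp add: a_eq power2_eq_square field_simps)
  then have sqrt_eq: "sqrt (a * \<beta>) = D * l * \<beta> / (4 * cosh t)"
    using \<open>D > 0\<close> \<open>l > 0\<close> \<open>\<beta> > 0\<close> by (intro real_sqrt_unique) auto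
  show "\<omega> * D = t / cosh t"
    unfolding \<omega>_def sqrt_eq t_def by (simp add: power2_eq_square)
qed

lemma underdamped_parameters:
  fixes D l \<beta> a \<omega> \<xi> :: real
  assumes "D > 0" "\<beta> > 0"
    and \<omega>_def: "\<omega> = sqrt (a * \<beta>) / 2" and \<xi>_def: "\<xi> = D * l / 4 * sqrt (\<beta> / a)"
    and a_def: "a = 4 / (D\<^sup>2 * \<beta>)"
  shows "\<omega> * D = 1" "\<xi> = D\<^sup>2 * l * \<beta> / 8"
proof -
  have "a * \<beta> = (2 / D)\<^sup>2"
    using \<open>D > 0\<close> \<open>\<beta> > 0\<close> by (simp add: a_def power2_eq_square field_simps)
  then have "sqrt (a * \<beta>) = 2 / D"
    using \<open>D > 0\<close> by (intro real_sqrt_unique) auto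
  then show "\<omega> * D = 1"
    using \<omega>_def \<open>D > 0\<close> by simp
  have "\<beta> / a = (\<beta> * D / 2)\<^sup>2"
    using \<open>D > 0\<close> \<open>\<beta> > 0\<close> by (simp add: a_def power2_eq_square field_simps)
  then have sqrt_eq: "sqrt (\<beta> / a) = \<beta> * D / 2"
    using \<open>D > 0\<close> \<open>\<beta> > 0\<close> by (intro real_sqrt_unique) auto
  show "\<xi> = D\<^sup>2 * l * \<beta> / 8"
    unfolding \<xi>_def sqrt_eq by (simp add: power2_eq_square)
qed

theorem lemma13:
  fixes D l \<beta> a \<omega> \<xi> :: real
    and h h1 h2 :: "real \<Rightarrow> real"
  assumes pos: "D > 0" "l > 0" "\<beta> > 0" "a > 0"
    and \<omega>_def: "\<omega> = sqrt (a * \<beta>) / 2"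
    and \<xi>_def: "\<xi> = D * l / 4 * sqrt (\<beta> / a)"
    and d1: "\<And>x. (h has_real_derivative h1 x) (at x)"
    and d2: "\<And>x. (h1 has_real_derivative h2 x) (at x)"
    and ode: "\<And>x. \<omega>\<^sup>2 * h x + 2 * \<xi> * \<omega> * h1 x + h2 x = 0"
    and init: "h 0 = 0" "h1 0 = 1"
  shows "(a = D\<^sup>2 * l\<^sup>2 * \<beta> / 16 * (1 - (tanh (D\<^sup>2 * l * \<beta> / 8))\<^sup>2) \<longrightarrow>
            (\<forall>x\<in>{0..D}. h1 x > 0 \<and> h2 x < 0) \<and>
            inverse (h1 D) = exp (D * \<omega> * \<xi>) /
              (cosh (D * \<omega> * sqrt (\<xi>\<^sup>2 - 1))
               - \<xi> / sqrt (\<xi>\<^sup>2 - 1) * sinh (D * \<omega> * sqrt (\<xi>\<^sup>2 - 1))))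
       \<and> (D\<^sup>2 * l * \<beta> < 8 \<and> a = 4 / (D\<^sup>2 * \<beta>) \<longrightarrow>
            (\<forall>x\<in>{0..D}. h1 x > 0 \<and> h2 x < 0) \<and>
            inverse (h1 D) = exp (D * \<omega> * \<xi>) /
              (cos (D * \<omega> * sqrt (1 - \<xi>\<^sup>2))
               - \<xi> / sqrt (1 - \<xi>\<^sup>2) * sin (D * \<omega> * sqrt (1 - \<xi>\<^sup>2))))"
proof -
  have "\<omega> > 0" "\<xi> > 0"
    using pos by (simp_all add: \<omega>_def \<xi>_def)
  have h2_eq: "h2 x = - (\<omega>\<^sup>2 * h x) - 2 * (\<omega> * \<xi>) * h1 x" for x
    using ode[of x] by (simp add: algebra_simps)
  have osc: "solves_damped_oscillator \<omega> (\<omega> * \<xi>) h h1"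
    using d1 d2 by (simp add: solves_damped_oscillator_def flip: h2_eq)
  have concave: "\<forall>x\<in>{0..D}. h2 x < 0" if "\<forall>x\<in>{0..D}. h1 x > 0"
    using solves_damped_oscillator_concave[OF osc _ init(1) that] \<open>\<omega> > 0\<close> \<open>\<xi> > 0\<close>
    by (simp add: h2_eq)
  have "D\<^sup>2 * l * \<beta> / 8 > 0"
    using pos by simp
  note overdamped = overdamped_regime[OF osc init \<open>\<omega> > 0\<close> this]
    overdamped_parameters[OF pos(1-3) \<omega>_def \<xi>_def refl]
  have "\<xi> < 1 \<and> \<omega> * D = 1" if "D\<^sup>2 * l * \<beta> < 8 \<and> a = 4 / (D\<^sup>2 * \<beta>)"
    using underdamped_parameters[OF pos(1,3) \<omega>_def \<xi>_def] that by simp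
  note underdamped = this underdamped_regime[OF osc init \<open>\<omega> > 0\<close> less_imp_le[OF \<open>\<xi> > 0\<close>]]
  show ?thesis
    using overdamped underdamped concave by blast
qed

end
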